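(* Drift-less setting with target $\rho_d=|\Psi\rangle\langle\Psi|$. Let $\mathcal H'\subseteq\mathcal H$ be a subspace and suppose QL operators $D_k=D_{\mathcal N_k}\otimes I_{\bar{\mathcal N}_k}$ with $D_k|\Psi\rangle=0$ for all $k$ make $\rho_d$ conditionally asymptotically stable relative to $\mathcal H'$ for $\mathcal L(0,\{D_k\})$ (i.e. $\rho_d$ is $\mathcal H'$-DQLS via these $D_k$). Then $\mathcal H'\subseteq\mathcal H\ominus\mathcal H_w=\mathcal H_d\oplus(\mathcal H\ominus\mathcal H_0)$.
   Context: $\mathcal H=\bigotimes_{a=1}^n\mathcal H_a$ finite-dimensional; neighborhoods $\mathcal N_k\subsetneq\{1,\dots,n\}$. $\mathcal L(0,\{D_k\})(\rho)=\sum_k(D_k\rho D_k^\dagger-\frac12\{D_k^\dagger D_k,\rho\})$. Conditional asymptotic stability relative to $\mathcal H'$: $e^{\mathcal Lt}(\rho_0)\to\rho_d$ for all density operators $\rho_0$ with support in $\mathcal H'$. $\mathcal H_d=\mathrm{span}\{|\Psi\rangle\}$; $\rho_{\mathcal N_k}=\mathrm{Tr}_{\bar{\mathcal N}_k}\rho_d$; $\mathcal H_0=\bigcap_k\mathrm{supp}(\rho_{\mathcal N_k}\otimes I_{\bar{\mathcal N}_k})$; $\mathcal H_w=\mathcal H_0\ominus\mathcal H_d$ (orthogonal complement of $\mathcal H_d$ in $\mathcal H_0$). *)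

theory Defs
  imports Complex_Main
begin

text \<open>Finite-dimensional multipartite Hilbert space H = tensor product of H_a, a < n,
  dim H_a = d a. Computational basis states are configurations x :: nat => nat with
  x a < d a for a < n and x a = 0 for a >= n. Vectors are complex functions on
  configurations (zero outside), operators are complex matrices indexed by configurations.\<close>

type_synonym cfg = "nat \<Rightarrow> nat"
type_synonym vec = "cfg \<Rightarrow> complex"
type_synonym op = "cfg \<Rightarrow> cfg \<Rightarrow> complex"

definition cfgs :: "nat \<Rightarrow> (nat \<Rightarrow> nat) \<Rightarrow> cfg set" where
  "cfgs n d = {x. \<forall>a. (a < n \<longrightarrow> x a < d a) \<and> (n \<le> a \<longrightarrow> x a = 0)}"

definition vecs :: "cfg set \<Rightarrow> vec set" where
  "vecs C = {v. \<forall>x. x \<notin> C \<longrightarrow> v x = 0}"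

definition is_subspace :: "cfg set \<Rightarrow> vec set \<Rightarrow> bool" where
  "is_subspace C S \<longleftrightarrow> S \<subseteq> vecs C \<and> (\<lambda>_. 0) \<in> S \<and>
     (\<forall>v\<in>S. \<forall>w\<in>S. (\<lambda>x. v x + w x) \<in> S) \<and> (\<forall>c. \<forall>v\<in>S. (\<lambda>x. c * v x) \<in> S)"

definition inner_c :: "cfg set \<Rightarrow> vec \<Rightarrow> vec \<Rightarrow> complex" where
  "inner_c C v w = (\<Sum>x\<in>C. cnj (v x) * w x)"

definition mvec :: "cfg set \<Rightarrow> op \<Rightarrow> vec \<Rightarrow> vec" where
  "mvec C A v = (\<lambda>x. if x \<in> C then (\<Sum>y\<in>C. A x y * v y) else 0)"

definition mmul :: "cfg set \<Rightarrow> op \<Rightarrow> op \<Rightarrow> op" where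
  "mmul C A B = (\<lambda>x y. \<Sum>z\<in>C. A x z * B z y)"

definition adj :: "op \<Rightarrow> op" where
  "adj A = (\<lambda>x y. cnj (A y x))"

definition trace_c :: "cfg set \<Rightarrow> op \<Rightarrow> complex" where
  "trace_c C A = (\<Sum>x\<in>C. A x x)"

definition supp_op :: "cfg set \<Rightarrow> op \<Rightarrow> vec set" where
  "supp_op C A = {w. \<exists>v\<in>vecs C. w = mvec C A v}"

definition density :: "cfg set \<Rightarrow> op \<Rightarrow> bool" where
  "density C \<rho> \<longleftrightarrow> (\<forall>v\<in>vecs C. Im (inner_c C v (mvec C \<rho> v)) = 0
        \<and> 0 \<le> Re (inner_c C v (mvec C \<rho> v))) \<and> trace_c C \<rho> = 1"

definition restr :: "nat set \<Rightarrow> cfg \<Rightarrow> cfg" where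
  "restr N x = (\<lambda>a. if a \<in> N then x a else 0)"

definition merge :: "nat set \<Rightarrow> cfg \<Rightarrow> cfg \<Rightarrow> cfg" where
  "merge N u z = (\<lambda>a. if a \<in> N then u a else z a)"

text \<open>X_N tensor identity on the complement of N (X_N acts on configurations restricted to N).\<close>
definition tensor_id :: "nat set \<Rightarrow> op \<Rightarrow> op" where
  "tensor_id N XN = (\<lambda>x y. XN (restr N x) (restr N y) *
      (if \<forall>a. a \<notin> N \<longrightarrow> x a = y a then 1 else 0))"

definition ql_op :: "cfg set \<Rightarrow> nat set \<Rightarrow> op \<Rightarrow> bool" where
  "ql_op C N D \<longleftrightarrow> (\<exists>DN. \<forall>x\<in>C. \<forall>y\<in>C. D x y = tensor_id N DN x y)"

text \<open>Partial trace over the complement of N (result indexed by configurations restricted to N).\<close>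
definition ptrace :: "cfg set \<Rightarrow> nat set \<Rightarrow> op \<Rightarrow> op" where
  "ptrace C N \<rho> = (\<lambda>u v. \<Sum>z\<in>{z\<in>C. \<forall>a\<in>N. z a = 0}. \<rho> (merge N u z) (merge N v z))"

definition lind :: "cfg set \<Rightarrow> nat \<Rightarrow> (nat \<Rightarrow> op) \<Rightarrow> op \<Rightarrow> op" where
  "lind C m D \<rho> = (\<lambda>x y. \<Sum>k<m.
      mmul C (mmul C (D k) \<rho>) (adj (D k)) x y
      - (1/2) * (mmul C (mmul C (adj (D k)) (D k)) \<rho> x y
                 + mmul C \<rho> (mmul C (adj (D k)) (D k)) x y))"

text \<open>Semigroup e^{Lt} via the exponential series.\<close>
definition evol :: "(op \<Rightarrow> op) \<Rightarrow> real \<Rightarrow> op \<Rightarrow> op" where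
  "evol L t \<rho> = (\<lambda>x y. \<Sum>j. complex_of_real (t ^ j / fact j) * (L ^^ j) \<rho> x y)"

definition cond_asym_stable :: "cfg set \<Rightarrow> (op \<Rightarrow> op) \<Rightarrow> op \<Rightarrow> vec set \<Rightarrow> bool" where
  "cond_asym_stable C L \<rho>d H' \<longleftrightarrow>
     (\<forall>\<rho>0. density C \<rho>0 \<and> supp_op C \<rho>0 \<subseteq> H' \<longrightarrow>
        (\<forall>x\<in>C. \<forall>y\<in>C. ((\<lambda>t. evol L t \<rho>0 x y) \<longlongrightarrow> \<rho>d x y) at_top))"

definition proj :: "vec \<Rightarrow> op" where
  "proj \<Psi> = (\<lambda>x y. \<Psi> x * cnj (\<Psi> y))"

definition H0 :: "cfg set \<Rightarrow> nat \<Rightarrow> (nat \<Rightarrow> nat set) \<Rightarrow> op \<Rightarrow> vec set" where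
  "H0 C m N \<rho>d = {v\<in>vecs C. \<forall>k<m. v \<in> supp_op C (tensor_id (N k) (ptrace C (N k) \<rho>d))}"

text \<open>H_w = H_0 minus H_d (orthogonal complement of span Psi inside H_0).\<close>
definition Hw :: "cfg set \<Rightarrow> nat \<Rightarrow> (nat \<Rightarrow> nat set) \<Rightarrow> vec \<Rightarrow> vec set" where
  "Hw C m N \<Psi> = {w\<in>H0 C m N (proj \<Psi>). inner_c C \<Psi> w = 0}"

definition orth_compl :: "cfg set \<Rightarrow> vec set \<Rightarrow> vec set" where
  "orth_compl C S = {v\<in>vecs C. \<forall>w\<in>S. inner_c C w v = 0}"

end

theory Submission
  imports Defs "HOL-Library.FuncSet"
begin

(*
  Proof idea.  Let v \<in> H' and w \<in> H_w; we show <w,v> = 0.  Suppose not.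

  (1) Quasi-locality: every vector of H_0 is "dark", i.e. annihilated by all D_k.
      Indeed D_k = D_{N_k} \<otimes> I kills \<Psi>, hence kills the range of
      \<rho>_{N_k} \<otimes> I, the reduced state of |\<Psi>><\<Psi>| tensored with the identity.
  (2) Monotonicity: for a dark w and a positive semidefinite X, the population
      <w, e^{Lt}(X) w> is non-decreasing in t \<ge> 0.  Since e^{Lt} is only given as
      an exponential series, we approximate it by the Euler iterates (I + (t/n)L)^n,
      which in turn are O(1/n)-close to iterates of the completely positive
      "Kraus step"  X \<mapsto> G X G\<^sup>\<dagger> + e \<Sigma>_k D_k X D_k\<^sup>\<dagger>,  G = I - (e/2) \<Sigma>_k D_k\<^sup>\<dagger> D_k.
      Each Kraus step preserves positivity and cannot decrease <w, X w>, as G w = w.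
  (3) The initial state \<rho>_0 = |v><v| / |v|^2 has support in H' and <w,\<rho>_0 w> > 0,
      but by stability <w, e^{Lt}(\<rho>_0) w> \<rightarrow> |<w,\<Psi>>|^2 = 0, contradicting (2).

  Matrices are compared through the entrywise l1-norm [enorm], which is
  submultiplicative and bounds every entry; this yields all the estimates in (2).
*)

lemma finite_cfgs: "finite (cfgs n d)"
proof -
  let ?ext = "\<lambda>f a. if a < n then f a else 0"
  have "cfgs n d \<subseteq> ?ext ` (PiE {..<n} (\<lambda>a. {..<d a}))"
  proof
    fix x assume x: "x \<in> cfgs n d"
    define f where "f = (\<lambda>a. if a < n then x a else undefined)"
    have f_Pi: "f \<in> PiE {..<n} (\<lambda>a. {..<d a})"
      using x unfolding cfgs_def PiE_def extensional_def f_def by auto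
    have "x = ?ext f" using x unfolding f_def cfgs_def by (auto simp: fun_eq_iff)
    thus "x \<in> ?ext ` (PiE {..<n} (\<lambda>a. {..<d a}))" using f_Pi by blast
  qed
  moreover have "finite (PiE {..<n} (\<lambda>a. {..<d a}))" by (rule finite_PiE) auto
  ultimately show ?thesis by (meson finite_imageI finite_subset)
qed

section \<open>The entrywise l1-norm of a matrix\<close>

definition enorm :: "cfg set \<Rightarrow> op \<Rightarrow> real" where
  "enorm C X = (\<Sum>x\<in>C. \<Sum>y\<in>C. cmod (X x y))"

lemma enorm_nonneg: "0 \<le> enorm C X"
  unfolding enorm_def by (intro sum_nonneg norm_ge_zero)

lemma le_sum_mem: "finite A \<Longrightarrow> i \<in> A \<Longrightarrow> (\<And>x. 0 \<le> f x) \<Longrightarrow> f i \<le> (\<Sum>x\<in>A. (f x::real))"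
  by (rule member_le_sum) auto

lemma enorm_entry:
  assumes f: "finite C" and x: "x \<in> C" and y: "y \<in> C"
  shows "cmod (X x y) \<le> enorm C X"
proof -
  have "cmod (X x y) \<le> (\<Sum>y\<in>C. cmod (X x y))" using f y by (rule le_sum_mem) simp
  also have "\<dots> \<le> enorm C X" unfolding enorm_def using f x
    by (rule le_sum_mem[where f="\<lambda>x. \<Sum>y\<in>C. cmod (X x y)"]) (intro sum_nonneg norm_ge_zero)
  finally show ?thesis .
qed

lemma enorm_mmul: "enorm C (mmul C A B) \<le> enorm C A * enorm C B"
proof (cases "finite C")
  case f: True
  have "enorm C (mmul C A B) \<le> (\<Sum>x\<in>C. \<Sum>y\<in>C. \<Sum>z\<in>C. cmod (A x z) * cmod (B z y))"
    unfolding enorm_def mmul_def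
    by (intro sum_mono order.trans[OF norm_sum]) (simp add: norm_mult)
  also have "\<dots> = (\<Sum>x\<in>C. \<Sum>z\<in>C. \<Sum>y\<in>C. cmod (A x z) * cmod (B z y))"
    by (rule sum.cong[OF refl], rule sum.swap)
  also have "\<dots> \<le> (\<Sum>x\<in>C. \<Sum>z\<in>C. \<Sum>z'\<in>C. \<Sum>y\<in>C. cmod (A x z) * cmod (B z' y))"
    by (intro sum_mono le_sum_mem[where f="\<lambda>z'. \<Sum>y\<in>C. cmod (A _ _) * cmod (B z' y)"] f)
       (auto intro!: sum_nonneg)
  also have "\<dots> = enorm C A * enorm C B"
    unfolding enorm_def sum_distrib_right by (simp only: sum_distrib_left)
  finally show ?thesis .
qed (simp add: enorm_def)

lemma enorm_adj: "enorm C (adj A) = enorm C A"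
  unfolding enorm_def adj_def by (simp, rule sum.swap)

lemma enorm_add: "enorm C (\<lambda>x y. X x y + Y x y) \<le> enorm C X + enorm C Y"
proof -
  have "enorm C (\<lambda>x y. X x y + Y x y) \<le> (\<Sum>x\<in>C. \<Sum>y\<in>C. cmod (X x y) + cmod (Y x y))"
    unfolding enorm_def by (intro sum_mono norm_triangle_ineq)
  also have "\<dots> = enorm C X + enorm C Y" unfolding enorm_def by (simp only: sum.distrib)
  finally show ?thesis .
qed

lemma enorm_diff: "enorm C (\<lambda>x y. X x y - Y x y) \<le> enorm C X + enorm C Y"
proof -
  have "enorm C (\<lambda>x y. X x y - Y x y) \<le> (\<Sum>x\<in>C. \<Sum>y\<in>C. cmod (X x y) + cmod (Y x y))"
    unfolding enorm_def by (intro sum_mono norm_triangle_ineq4)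
  also have "\<dots> = enorm C X + enorm C Y" unfolding enorm_def by (simp only: sum.distrib)
  finally show ?thesis .
qed

lemma enorm_scale: "enorm C (\<lambda>x y. c * X x y) = cmod c * enorm C X"
  unfolding enorm_def by (simp add: sum_distrib_left norm_mult)

lemma enorm_sum: "enorm C (\<lambda>x y. \<Sum>k\<in>K. F k x y) \<le> (\<Sum>k\<in>K. enorm C (F k))"
proof -
  have "enorm C (\<lambda>x y. \<Sum>k\<in>K. F k x y) \<le> (\<Sum>x\<in>C. \<Sum>y\<in>C. \<Sum>k\<in>K. cmod (F k x y))"
    unfolding enorm_def by (intro sum_mono norm_sum)
  also have "\<dots> = (\<Sum>x\<in>C. \<Sum>k\<in>K. \<Sum>y\<in>C. cmod (F k x y))"
    by (rule sum.cong[OF refl], rule sum.swap)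
  also have "\<dots> = (\<Sum>k\<in>K. enorm C (F k))" unfolding enorm_def by (rule sum.swap)
  finally show ?thesis .
qed

lemma enorm_cong: "(\<And>x y. x \<in> C \<Longrightarrow> y \<in> C \<Longrightarrow> X x y = Y x y) \<Longrightarrow> enorm C X = enorm C Y"
  unfolding enorm_def by simp

definition sandwich :: "cfg set \<Rightarrow> op \<Rightarrow> op \<Rightarrow> op" where
  "sandwich C A X = mmul C (mmul C A X) (adj A)"

lemma enorm_sandwich: "enorm C (sandwich C A X) \<le> enorm C A ^ 2 * enorm C X"
proof -
  have "enorm C (sandwich C A X) \<le> enorm C (mmul C A X) * enorm C A"
    unfolding sandwich_def using enorm_mmul enorm_adj by metis
  also have "\<dots> \<le> enorm C A * enorm C X * enorm C A" by (intro mult_right_mono enorm_mmul enorm_nonneg)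
  finally show ?thesis by (simp add: power2_eq_square mult_ac)
qed

lemma mmul_add_right: "mmul C A (\<lambda>x y. X x y + Y x y) = (\<lambda>x y. mmul C A X x y + mmul C A Y x y)"
  unfolding mmul_def by (simp add: distrib_left sum.distrib)
lemma mmul_add_left: "mmul C (\<lambda>x y. X x y + Y x y) A = (\<lambda>x y. mmul C X A x y + mmul C Y A x y)"
  unfolding mmul_def by (simp add: distrib_right sum.distrib)
lemma mmul_scale_right: "mmul C A (\<lambda>x y. c * X x y) = (\<lambda>x y. c * mmul C A X x y)"
  unfolding mmul_def by (simp add: sum_distrib_left mult_ac)
lemma mmul_scale_left: "mmul C (\<lambda>x y. c * X x y) A = (\<lambda>x y. c * mmul C X A x y)"
  unfolding mmul_def by (simp add: sum_distrib_left mult_ac)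

lemma adj_mmul: "adj (mmul C A B) = mmul C (adj B) (adj A)"
  unfolding adj_def mmul_def by (simp add: mult.commute)

lemma adj_adj: "adj (adj A) = A" unfolding adj_def by simp

lemma mvec_vecs: "mvec C A v \<in> vecs C"
  unfolding vecs_def mvec_def by simp

lemma mvec_zero: "mvec C A (\<lambda>_. 0) = (\<lambda>_. 0)" unfolding mvec_def by (simp add: fun_eq_iff)

lemma mvec_mmul: "mvec C (mmul C A B) v = mvec C A (mvec C B v)"
proof (rule ext)
  fix x
  show "mvec C (mmul C A B) v x = mvec C A (mvec C B v) x"
  proof (cases "x \<in> C")
    case True
    have "mvec C (mmul C A B) v x = (\<Sum>y\<in>C. \<Sum>z\<in>C. A x z * B z y * v y)"
      using True unfolding mvec_def mmul_def by (simp add: sum_distrib_right)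
    also have "\<dots> = (\<Sum>z\<in>C. \<Sum>y\<in>C. A x z * B z y * v y)" by (rule sum.swap)
    also have "\<dots> = mvec C A (mvec C B v) x"
      using True unfolding mvec_def by (simp add: sum_distrib_left mult.assoc)
    finally show ?thesis .
  qed (simp add: mvec_def)
qed

lemma lind_add: "lind C m D (\<lambda>x y. X x y + Y x y) x y = lind C m D X x y + lind C m D Y x y"
  unfolding lind_def mmul_add_right mmul_add_left
  by (simp add: sum.distrib[symmetric] algebra_simps)

lemma lind_scale: "lind C m D (\<lambda>x y. c * X x y) x y = c * lind C m D X x y"
  unfolding lind_def mmul_scale_right mmul_scale_left
  by (simp add: sum_distrib_left algebra_simps)

lemma lind_diff: "lind C m D (\<lambda>x y. X x y - Y x y) x y = lind C m D X x y - lind C m D Y x y"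
  using lind_add[of C m D "\<lambda>x y. X x y - Y x y" Y x y] by simp

lemma lind_sum_scaled:
  "finite J \<Longrightarrow> lind C m D (\<lambda>x y. \<Sum>j\<in>J. c j * F j x y) x y = (\<Sum>j\<in>J. c j * lind C m D (F j) x y)"
proof (induction J arbitrary: x y rule: finite_induct)
  case empty thus ?case using lind_scale[of C m D 0 "\<lambda>x y. 0" x y] by simp
next
  case (insert i J)
  have "lind C m D (\<lambda>x y. \<Sum>j\<in>insert i J. c j * F j x y) x y
      = lind C m D (\<lambda>x y. c i * F i x y + (\<Sum>j\<in>J. c j * F j x y)) x y"
    using insert by simp
  also have "\<dots> = c i * lind C m D (F i) x y + lind C m D (\<lambda>x y. \<Sum>j\<in>J. c j * F j x y) x y"
    by (simp only: lind_add lind_scale)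
  also have "\<dots> = (\<Sum>j\<in>insert i J. c j * lind C m D (F j) x y)"
    using insert by simp
  finally show ?case .
qed

definition lind_const :: "cfg set \<Rightarrow> nat \<Rightarrow> (nat \<Rightarrow> op) \<Rightarrow> real" where
  "lind_const C m D = (\<Sum>k<m. 2 * enorm C (D k) ^ 2)"

lemma lind_const_nonneg: "0 \<le> lind_const C m D"
  unfolding lind_const_def by (intro sum_nonneg) simp

lemma lind_bound: "enorm C (lind C m D X) \<le> lind_const C m D * enorm C X"
proof -
  let ?T = "\<lambda>k x y. mmul C (mmul C (D k) X) (adj (D k)) x y
      - (1/2) * (mmul C (mmul C (adj (D k)) (D k)) X x y
                 + mmul C X (mmul C (adj (D k)) (D k)) x y)"
  have "enorm C (lind C m D X) \<le> (\<Sum>k<m. enorm C (?T k))"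
    unfolding lind_def by (rule enorm_sum)
  also have "\<dots> \<le> (\<Sum>k<m. 2 * enorm C (D k) ^ 2 * enorm C X)"
  proof (rule sum_mono)
    fix k
    let ?a = "enorm C (D k)"
    have jump: "enorm C (mmul C (mmul C (D k) X) (adj (D k))) \<le> ?a * enorm C X * ?a"
      by (metis enorm_adj enorm_mmul enorm_nonneg mult_right_mono order.trans)
    have left: "enorm C (mmul C (mmul C (adj (D k)) (D k)) X) \<le> ?a * ?a * enorm C X"
      by (metis enorm_adj enorm_mmul enorm_nonneg mult_right_mono order.trans)
    have right: "enorm C (mmul C X (mmul C (adj (D k)) (D k))) \<le> enorm C X * (?a * ?a)"
      by (metis enorm_adj enorm_mmul enorm_nonneg mult_left_mono order.trans)
    have "enorm C (?T k) \<le> enorm C (mmul C (mmul C (D k) X) (adj (D k)))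
        + enorm C (\<lambda>x y. (1/2) * (mmul C (mmul C (adj (D k)) (D k)) X x y
                 + mmul C X (mmul C (adj (D k)) (D k)) x y))"
      by (rule enorm_diff)
    also have "\<dots> \<le> enorm C (mmul C (mmul C (D k) X) (adj (D k)))
        + (1/2) * (enorm C (mmul C (mmul C (adj (D k)) (D k)) X)
                 + enorm C (mmul C X (mmul C (adj (D k)) (D k))))"
      unfolding enorm_scale using enorm_add by simp
    also have "\<dots> \<le> 2 * ?a ^ 2 * enorm C X"
      using jump left right by (simp add: power2_eq_square algebra_simps)
    finally show "enorm C (?T k) \<le> 2 * ?a ^ 2 * enorm C X" .
  qed
  also have "\<dots> = lind_const C m D * enorm C X" by (simp add: lind_const_def sum_distrib_right)
  finally show ?thesis .
qed

lemma enorm_lind_power: "enorm C ((lind C m D ^^ j) X) \<le> lind_const C m D ^ j * enorm C X"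
proof (induction j)
  case (Suc j)
  have "enorm C ((lind C m D ^^ Suc j) X) \<le> lind_const C m D * enorm C ((lind C m D ^^ j) X)"
    using lind_bound by simp
  also have "\<dots> \<le> lind_const C m D * (lind_const C m D ^ j * enorm C X)"
    by (intro mult_left_mono Suc lind_const_nonneg)
  finally show ?case by (simp add: mult_ac)
qed simp

definition sesq :: "cfg set \<Rightarrow> vec \<Rightarrow> op \<Rightarrow> vec \<Rightarrow> complex" where
  "sesq C u X v = (\<Sum>x\<in>C. \<Sum>y\<in>C. cnj (u x) * X x y * v y)"

lemma inner_mvec_sesq: "inner_c C u (mvec C A u) = sesq C u A u"
  unfolding inner_c_def mvec_def sesq_def by (simp add: sum_distrib_left mult.assoc)

lemma sesq_mmul_right: "sesq C u (mmul C X B) v = sesq C u X (mvec C B v)"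
proof -
  have "sesq C u (mmul C X B) v = (\<Sum>x\<in>C. \<Sum>y\<in>C. \<Sum>z\<in>C. cnj (u x) * X x z * B z y * v y)"
    unfolding sesq_def mmul_def by (simp add: sum_distrib_left sum_distrib_right mult.assoc)
  also have "\<dots> = (\<Sum>x\<in>C. \<Sum>z\<in>C. \<Sum>y\<in>C. cnj (u x) * X x z * B z y * v y)"
    by (rule sum.cong[OF refl], rule sum.swap)
  also have "\<dots> = sesq C u X (mvec C B v)"
    unfolding sesq_def mvec_def by (simp add: sum_distrib_left sum_distrib_right mult.assoc)
  finally show ?thesis .
qed

lemma sesq_mmul_left: "sesq C u (mmul C A X) v = sesq C (mvec C (adj A) u) X v"
proof -
  have "sesq C u (mmul C A X) v = (\<Sum>x\<in>C. \<Sum>y\<in>C. \<Sum>z\<in>C. cnj (u x) * A x z * X z y * v y)"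
    unfolding sesq_def mmul_def by (simp add: sum_distrib_left sum_distrib_right mult.assoc)
  also have "\<dots> = (\<Sum>z\<in>C. \<Sum>y\<in>C. \<Sum>x\<in>C. cnj (u x) * A x z * X z y * v y)"
    by (subst sum.swap, subst (2) sum.swap, subst sum.swap, rule refl)
  also have "\<dots> = sesq C (mvec C (adj A) u) X v"
    unfolding sesq_def mvec_def adj_def by (simp add: sum_distrib_left sum_distrib_right mult_ac)
  finally show ?thesis .
qed

lemma sesq_sandwich: "sesq C u (sandwich C A X) v = sesq C (mvec C (adj A) u) X (mvec C (adj A) v)"
  unfolding sandwich_def by (rule trans[OF sesq_mmul_right sesq_mmul_left])

lemma sesq_add: "sesq C u (\<lambda>x y. X x y + Y x y) v = sesq C u X v + sesq C u Y v"
  unfolding sesq_def by (simp add: algebra_simps sum.distrib)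
lemma sesq_diff: "sesq C u (\<lambda>x y. X x y - Y x y) v = sesq C u X v - sesq C u Y v"
  unfolding sesq_def by (simp add: algebra_simps sum_subtractf)
lemma sesq_scale: "sesq C u (\<lambda>x y. c * X x y) v = c * sesq C u X v"
  unfolding sesq_def by (simp add: sum_distrib_left mult_ac)
lemma sesq_sum: "sesq C u (\<lambda>x y. \<Sum>k\<in>K. F k x y) v = (\<Sum>k\<in>K. sesq C u (F k) v)"
proof -
  have "sesq C u (\<lambda>x y. \<Sum>k\<in>K. F k x y) v = (\<Sum>x\<in>C. \<Sum>y\<in>C. \<Sum>k\<in>K. cnj (u x) * F k x y * v y)"
    unfolding sesq_def by (simp add: sum_distrib_left sum_distrib_right)
  also have "\<dots> = (\<Sum>x\<in>C. \<Sum>k\<in>K. \<Sum>y\<in>C. cnj (u x) * F k x y * v y)"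
    by (rule sum.cong[OF refl], rule sum.swap)
  also have "\<dots> = (\<Sum>k\<in>K. \<Sum>x\<in>C. \<Sum>y\<in>C. cnj (u x) * F k x y * v y)"
    by (rule sum.swap)
  finally show ?thesis unfolding sesq_def .
qed

lemma sesq_rank1: "sesq C u (\<lambda>x y. v x * cnj (v y) * r) u = r * (inner_c C u v * cnj (inner_c C u v))"
  unfolding sesq_def inner_c_def by (simp add: sum_distrib_left sum_distrib_right mult_ac)

lemma sesq_bound:
  assumes f: "finite C"
  shows "cmod (sesq C u X u) \<le> (\<Sum>x\<in>C. cmod (u x))^2 * enorm C X"
proof -
  let ?W = "\<Sum>x\<in>C. cmod (u x)"
  have "cmod (sesq C u X u) \<le> (\<Sum>x\<in>C. \<Sum>y\<in>C. ?W * ?W * cmod (X x y))"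
    unfolding sesq_def
  proof (intro order.trans[OF norm_sum] sum_mono order.trans[OF norm_sum])
    fix x y assume x: "x \<in> C" and y: "y \<in> C"
    have ux: "cmod (u x) \<le> ?W" using f x by (rule le_sum_mem) simp
    have uy: "cmod (u y) \<le> ?W" using f y by (rule le_sum_mem) simp
    have "cmod (cnj (u x) * X x y * u y) = cmod (u x) * cmod (u y) * cmod (X x y)"
      by (simp add: norm_mult)
    also have "\<dots> \<le> ?W * ?W * cmod (X x y)"
      by (intro mult_right_mono mult_mono ux uy) (auto intro: sum_nonneg)
    finally show "cmod (cnj (u x) * X x y * u y) \<le> ?W * ?W * cmod (X x y)" .
  qed
  also have "\<dots> = ?W^2 * enorm C X"
    unfolding enorm_def by (simp add: sum_distrib_left power2_eq_square)
  finally show ?thesis .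
qed

definition psd :: "cfg set \<Rightarrow> op \<Rightarrow> bool" where
  "psd C X \<longleftrightarrow> (\<forall>u\<in>vecs C. 0 \<le> Re (sesq C u X u))"

definition dark :: "cfg set \<Rightarrow> nat \<Rightarrow> (nat \<Rightarrow> op) \<Rightarrow> vec \<Rightarrow> bool" where
  "dark C m D w \<longleftrightarrow> w \<in> vecs C \<and> (\<forall>k<m. mvec C (D k) w = (\<lambda>_. 0))"

section \<open>Euler steps and Kraus steps\<close>

text \<open>The generator splits as L(X) = \<Sigma>_k D_k X adj(D_k) + K X + X K with the Hermitian
  damping matrix K = -1/2 \<Sigma>_k adj(D_k) D_k.\<close>
definition damp_op :: "cfg set \<Rightarrow> nat \<Rightarrow> (nat \<Rightarrow> op) \<Rightarrow> op" where
  "damp_op C m D = (\<lambda>x y. -(1/2) * (\<Sum>k<m. mmul C (adj (D k)) (D k) x y))"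

definition id_op :: op where "id_op = (\<lambda>x y. if x = y then 1 else 0)"

definition nojump_op :: "cfg set \<Rightarrow> nat \<Rightarrow> (nat \<Rightarrow> op) \<Rightarrow> real \<Rightarrow> op" where
  "nojump_op C m D e = (\<lambda>x y. id_op x y + of_real e * damp_op C m D x y)"

text \<open>The Euler step I + e L, whose n-th power with e = t/n approximates e^{tL}.\<close>
definition euler_step :: "cfg set \<Rightarrow> nat \<Rightarrow> (nat \<Rightarrow> op) \<Rightarrow> real \<Rightarrow> op \<Rightarrow> op" where
  "euler_step C m D e X = (\<lambda>x y. X x y + of_real e * lind C m D X x y)"

text \<open>The Kraus step: a completely positive map agreeing with the Euler step up to O(e^2).\<close>
definition kraus_step :: "cfg set \<Rightarrow> nat \<Rightarrow> (nat \<Rightarrow> op) \<Rightarrow> real \<Rightarrow> op \<Rightarrow> op" where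
  "kraus_step C m D e X =
     (\<lambda>x y. sandwich C (nojump_op C m D e) X x y + of_real e * (\<Sum>k<m. sandwich C (D k) X x y))"

lemma adj_damp_op: "adj (damp_op C m D) = damp_op C m D"
proof -
  have "adj (mmul C (adj (D k)) (D k)) = mmul C (adj (D k)) (D k)" for k
    by (simp add: adj_mmul adj_adj)
  hence "cnj (mmul C (adj (D k)) (D k) y x) = mmul C (adj (D k)) (D k) x y" for k x y
    unfolding adj_def by metis
  thus ?thesis unfolding adj_def damp_op_def by simp
qed

lemma adj_nojump_op: "adj (nojump_op C m D e) = nojump_op C m D e"
proof -
  have "cnj (damp_op C m D y x) = damp_op C m D x y" for x y
    using adj_damp_op[of C m D] unfolding adj_def by metis
  thus ?thesis unfolding adj_def nojump_op_def id_op_def by (auto simp: fun_eq_iff)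
qed

lemma mmul_damp_op_left:
  "mmul C (damp_op C m D) X x y = -(1/2) * (\<Sum>k<m. mmul C (mmul C (adj (D k)) (D k)) X x y)"
proof -
  have e: "damp_op C m D x z * X z y = -(1/2) * (\<Sum>k<m. mmul C (adj (D k)) (D k) x z * X z y)" for z
    unfolding damp_op_def by (simp only: sum_distrib_right mult.assoc)
  have "mmul C (damp_op C m D) X x y = (\<Sum>z\<in>C. damp_op C m D x z * X z y)"
    by (simp only: mmul_def)
  also have "\<dots> = -(1/2) * (\<Sum>z\<in>C. \<Sum>k<m. mmul C (adj (D k)) (D k) x z * X z y)"
    by (simp only: e sum_distrib_left)
  also have "\<dots> = -(1/2) * (\<Sum>k<m. \<Sum>z\<in>C. mmul C (adj (D k)) (D k) x z * X z y)"
    by (subst sum.swap) (rule refl)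
  finally show ?thesis unfolding mmul_def[of C "mmul C _ _" X] .
qed

lemma mmul_damp_op_right:
  "mmul C X (damp_op C m D) x y = -(1/2) * (\<Sum>k<m. mmul C X (mmul C (adj (D k)) (D k)) x y)"
proof -
  have e: "X x z * damp_op C m D z y = -(1/2) * (\<Sum>k<m. X x z * mmul C (adj (D k)) (D k) z y)" for z
    unfolding damp_op_def by (simp only: sum_distrib_left mult.left_commute)
  have "mmul C X (damp_op C m D) x y = (\<Sum>z\<in>C. X x z * damp_op C m D z y)"
    by (simp only: mmul_def)
  also have "\<dots> = -(1/2) * (\<Sum>z\<in>C. \<Sum>k<m. X x z * mmul C (adj (D k)) (D k) z y)"
    by (simp only: e sum_distrib_left)
  also have "\<dots> = -(1/2) * (\<Sum>k<m. \<Sum>z\<in>C. X x z * mmul C (adj (D k)) (D k) z y)"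
    by (subst sum.swap) (rule refl)
  finally show ?thesis unfolding mmul_def[of C X "mmul C _ _"] .
qed

lemma lind_decomp:
  "lind C m D X x y = (\<Sum>k<m. sandwich C (D k) X x y)
     + mmul C (damp_op C m D) X x y + mmul C X (damp_op C m D) x y"
proof -
  have "lind C m D X x y = (\<Sum>k<m. sandwich C (D k) X x y)
      - (1/2) * ((\<Sum>k<m. mmul C (mmul C (adj (D k)) (D k)) X x y)
      + (\<Sum>k<m. mmul C X (mmul C (adj (D k)) (D k)) x y))"
    unfolding lind_def sandwich_def by (simp only: sum_subtractf sum_distrib_left[symmetric] sum.distrib)
  thus ?thesis unfolding mmul_damp_op_left mmul_damp_op_right by (simp add: algebra_simps)
qed

lemma mmul_id_plus_left:
  assumes "finite C" "x \<in> C"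
  shows "mmul C (\<lambda>x y. id_op x y + c * A x y) X x y = X x y + c * mmul C A X x y"
proof -
  have "(\<Sum>z\<in>C. id_op x z * X z y) = (\<Sum>z\<in>C. if x = z then X z y else 0)"
    unfolding id_op_def by (rule sum.cong) auto
  hence "(\<Sum>z\<in>C. id_op x z * X z y) = X x y" using assms by simp
  thus ?thesis unfolding mmul_def
    by (simp add: distrib_right sum.distrib sum_distrib_left mult.assoc)
qed

lemma mmul_id_plus_right:
  assumes "finite C" "y \<in> C"
  shows "mmul C X (\<lambda>x y. id_op x y + c * A x y) x y = X x y + c * mmul C X A x y"
proof -
  have "(\<Sum>z\<in>C. X x z * id_op z y) = (\<Sum>z\<in>C. if z = y then X x z else 0)"
    unfolding id_op_def by (rule sum.cong) auto
  hence "(\<Sum>z\<in>C. X x z * id_op z y) = X x y" using assms by simp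
  thus ?thesis unfolding mmul_def
    by (simp add: distrib_left sum.distrib sum_distrib_left mult.left_commute)
qed

lemma kraus_step_eq:
  assumes f: "finite C" and x: "x \<in> C" and y: "y \<in> C"
  shows "kraus_step C m D e X x y = euler_step C m D e X x y + (of_real e)^2 * sandwich C (damp_op C m D) X x y"
proof -
  let ?G = "nojump_op C m D e" and ?K = "damp_op C m D"
  have G_right: "mmul C Y ?G x y = Y x y + of_real e * mmul C Y ?K x y" for Y
    unfolding nojump_op_def by (rule mmul_id_plus_right[OF f y])
  have G_left: "mmul C ?G Y x z = Y x z + of_real e * mmul C ?K Y x z" for Y z
    unfolding nojump_op_def by (rule mmul_id_plus_left[OF f x])
  have "mmul C (mmul C ?G X) ?K x y = mmul C X ?K x y + of_real e * mmul C (mmul C ?K X) ?K x y"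
  proof -
    have "mmul C (mmul C ?G X) ?K x y = (\<Sum>z\<in>C. (X x z + of_real e * mmul C ?K X x z) * ?K z y)"
      by (simp only: mmul_def[of C "mmul C ?G X"] G_left)
    thus ?thesis unfolding mmul_def[of C _ ?K]
      by (simp add: distrib_right sum.distrib sum_distrib_left mult.assoc)
  qed
  hence "sandwich C ?G X x y = (mmul C X ?K x y + of_real e * mmul C (mmul C ?K X) ?K x y) * of_real e
      + (X x y + of_real e * mmul C ?K X x y)"
    unfolding sandwich_def adj_nojump_op G_right G_left by (simp add: algebra_simps)
  thus ?thesis unfolding kraus_step_def euler_step_def lind_decomp sandwich_def adj_damp_op
    by (simp add: algebra_simps power2_eq_square)
qed

lemma enorm_euler_step: "enorm C (euler_step C m D e X) \<le> (1 + \<bar>e\<bar> * lind_const C m D) * enorm C X"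
proof -
  have "enorm C (euler_step C m D e X) \<le> enorm C X + enorm C (\<lambda>x y. of_real e * lind C m D X x y)"
    unfolding euler_step_def by (rule enorm_add)
  also have "\<dots> \<le> enorm C X + \<bar>e\<bar> * (lind_const C m D * enorm C X)"
    unfolding enorm_scale using lind_bound[of C m D X] by (simp add: mult_left_mono)
  finally show ?thesis by (simp add: algebra_simps)
qed

lemma enorm_euler_step_diff:
  "enorm C (\<lambda>x y. euler_step C m D e X x y - euler_step C m D e Y x y)
   \<le> (1 + \<bar>e\<bar> * lind_const C m D) * enorm C (\<lambda>x y. X x y - Y x y)"
proof -
  have "(\<lambda>x y. euler_step C m D e X x y - euler_step C m D e Y x y) = euler_step C m D e (\<lambda>x y. X x y - Y x y)"
    unfolding euler_step_def lind_diff by (simp add: fun_eq_iff algebra_simps)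
  thus ?thesis using enorm_euler_step by simp
qed

lemma enorm_kraus_euler_diff:
  assumes "finite C"
  shows "enorm C (\<lambda>x y. kraus_step C m D e X x y - euler_step C m D e X x y)
     \<le> e^2 * enorm C (damp_op C m D) ^ 2 * enorm C X"
proof -
  have "enorm C (\<lambda>x y. kraus_step C m D e X x y - euler_step C m D e X x y)
      = enorm C (\<lambda>x y. of_real (e^2) * sandwich C (damp_op C m D) X x y)"
    by (rule enorm_cong) (simp add: kraus_step_eq[OF assms])
  also have "\<dots> \<le> e^2 * (enorm C (damp_op C m D) ^ 2 * enorm C X)"
    unfolding enorm_scale by (simp add: norm_power mult_left_mono enorm_sandwich)
  finally show ?thesis by (simp add: mult_ac)
qed

lemma enorm_kraus_step:
  assumes "finite C"
  shows "enorm C (kraus_step C m D e X)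
     \<le> (1 + \<bar>e\<bar> * lind_const C m D + e^2 * enorm C (damp_op C m D) ^ 2) * enorm C X"
proof -
  have "enorm C (kraus_step C m D e X) = enorm C (\<lambda>x y. euler_step C m D e X x y
      + (kraus_step C m D e X x y - euler_step C m D e X x y))"
    by (rule enorm_cong) simp
  also have "\<dots> \<le> enorm C (euler_step C m D e X)
      + enorm C (\<lambda>x y. kraus_step C m D e X x y - euler_step C m D e X x y)"
    by (rule enorm_add)
  also have "\<dots> \<le> (1 + \<bar>e\<bar> * lind_const C m D) * enorm C X + e^2 * enorm C (damp_op C m D) ^ 2 * enorm C X"
    by (intro add_mono enorm_euler_step enorm_kraus_euler_diff assms)
  finally show ?thesis by (simp add: algebra_simps)
qed

lemma sesq_kraus_step:
  "sesq C u (kraus_step C m D e X) u =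
     sesq C (mvec C (adj (nojump_op C m D e)) u) X (mvec C (adj (nojump_op C m D e)) u)
     + of_real e * (\<Sum>k<m. sesq C (mvec C (adj (D k)) u) X (mvec C (adj (D k)) u))"
  unfolding kraus_step_def sesq_add sesq_scale sesq_sum sesq_sandwich ..

lemma psd_jump_sum:
  assumes "psd C X"
  shows "0 \<le> Re (\<Sum>k<m. sesq C (mvec C (adj (D k)) u) X (mvec C (adj (D k)) u))"
  unfolding Re_sum using assms mvec_vecs unfolding psd_def by (intro sum_nonneg) blast

lemma psd_kraus_step:
  assumes "0 \<le> e" "psd C X"
  shows "psd C (kraus_step C m D e X)"
  unfolding psd_def
proof
  fix u assume "u \<in> vecs C"
  have "0 \<le> Re (sesq C (mvec C (adj (nojump_op C m D e)) u) X (mvec C (adj (nojump_op C m D e)) u))"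
    using assms(2) mvec_vecs unfolding psd_def by blast
  thus "0 \<le> Re (sesq C u (kraus_step C m D e X) u)"
    unfolding sesq_kraus_step using psd_jump_sum[OF assms(2), where m=m and D=D and u=u] assms(1) by simp
qed

lemma nojump_fixes_dark:
  assumes f: "finite C" and w: "dark C m D w"
  shows "mvec C (nojump_op C m D e) w = w"
proof (rule ext)
  fix x
  show "mvec C (nojump_op C m D e) w x = w x"
  proof (cases "x \<in> C")
    case True
    have z: "mvec C (mmul C (adj (D j)) (D j)) w x = 0" if "j < m" for j
      unfolding mvec_mmul using w that mvec_zero unfolding dark_def by metis
    have "mvec C (nojump_op C m D e) w x = (\<Sum>y\<in>C. id_op x y * w y)
        + of_real e * (-(1/2)) * (\<Sum>j<m. \<Sum>y\<in>C. mmul C (adj (D j)) (D j) x y * w y)"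
      using True unfolding mvec_def nojump_op_def damp_op_def
      by (simp add: distrib_right sum.distrib sum_distrib_left sum_distrib_right mult.assoc)
         (subst sum.swap, rule refl)
    also have "(\<Sum>j<m. \<Sum>y\<in>C. mmul C (adj (D j)) (D j) x y * w y) = 0"
      using z True unfolding mvec_def by simp
    also have "(\<Sum>y\<in>C. id_op x y * w y) = (\<Sum>y\<in>C. if x = y then w y else 0)"
      unfolding id_op_def by (rule sum.cong) auto
    finally show ?thesis using f True by simp
  next
    case False thus ?thesis using w unfolding mvec_def vecs_def dark_def by simp
  qed
qed

lemma kraus_step_mono:
  assumes f: "finite C" and w: "dark C m D w" and e: "0 \<le> e" and X: "psd C X"
  shows "Re (sesq C w X w) \<le> Re (sesq C w (kraus_step C m D e X) w)"
  unfolding sesq_kraus_step adj_nojump_op nojump_fixes_dark[OF f w]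
  using psd_jump_sum[OF X, where m=m and D=D and u=w] e by simp

lemma kraus_iter_mono:
  assumes f: "finite C" and w: "dark C m D w" and e: "0 \<le> e" and X: "psd C X"
  shows "psd C ((kraus_step C m D e ^^ n) X)
    \<and> Re (sesq C w X w) \<le> Re (sesq C w ((kraus_step C m D e ^^ n) X) w)"
proof (induction n)
  case (Suc n)
  thus ?case using psd_kraus_step[OF e] kraus_step_mono[OF f w e] by (auto intro: order.trans)
qed (use X in simp)

lemma enorm_kraus_iter:
  assumes "finite C" "0 \<le> e"
  shows "enorm C ((kraus_step C m D e ^^ n) X)
    \<le> (1 + e * lind_const C m D + e^2 * enorm C (damp_op C m D) ^ 2) ^ n * enorm C X"
proof (induction n)
  case (Suc n)
  let ?b = "1 + e * lind_const C m D + e^2 * enorm C (damp_op C m D) ^ 2"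
  have b: "0 \<le> ?b" using assms lind_const_nonneg by (intro add_nonneg_nonneg) auto
  have "enorm C ((kraus_step C m D e ^^ Suc n) X) \<le> ?b * enorm C ((kraus_step C m D e ^^ n) X)"
    using enorm_kraus_step[OF assms(1), of m D e "(kraus_step C m D e ^^ n) X"] assms(2) by simp
  also have "\<dots> \<le> ?b * (?b ^ n * enorm C X)" by (intro mult_left_mono Suc b)
  finally show ?case by (simp add: mult_ac)
qed simp

lemma enorm_euler_kraus_iter_diff:
  assumes "finite C" "0 \<le> e"
  shows "enorm C (\<lambda>x y. (euler_step C m D e ^^ n) X x y - (kraus_step C m D e ^^ n) X x y)
     \<le> real n * e^2 * enorm C (damp_op C m D) ^ 2
        * (1 + e * lind_const C m D + e^2 * enorm C (damp_op C m D) ^ 2) ^ n * enorm C X"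
proof (induction n)
  case 0 thus ?case by (simp add: enorm_def)
next
  case (Suc n)
  let ?b = "1 + e * lind_const C m D + e^2 * enorm C (damp_op C m D) ^ 2"
  let ?a = "1 + e * lind_const C m D"
  let ?q = "enorm C (damp_op C m D) ^ 2"
  let ?A = "euler_step C m D e" and ?B = "kraus_step C m D e"
  let ?An = "(?A ^^ n) X" and ?Bn = "(?B ^^ n) X"
  have a0: "0 \<le> ?a" using assms lind_const_nonneg by simp
  have b1: "1 \<le> ?b" using assms lind_const_nonneg by simp
  have propagated: "enorm C (\<lambda>x y. ?A ?An x y - ?A ?Bn x y) \<le> ?b * (real n * e^2 * ?q * ?b ^ n * enorm C X)"
  proof -
    have "enorm C (\<lambda>x y. ?A ?An x y - ?A ?Bn x y) \<le> ?a * enorm C (\<lambda>x y. ?An x y - ?Bn x y)"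
      using enorm_euler_step_diff[of C m D e ?An ?Bn] assms(2) by simp
    also have "\<dots> \<le> ?b * (real n * e^2 * ?q * ?b ^ n * enorm C X)"
      by (intro mult_mono Suc) (use a0 b1 enorm_nonneg in auto)
    finally show ?thesis .
  qed
  have fresh: "enorm C (\<lambda>x y. ?A ?Bn x y - ?B ?Bn x y) \<le> e^2 * ?q * (?b ^ Suc n * enorm C X)"
  proof -
    have "enorm C (\<lambda>x y. ?A ?Bn x y - ?B ?Bn x y) = enorm C (\<lambda>x y. ?B ?Bn x y - ?A ?Bn x y)"
      unfolding enorm_def by (simp add: norm_minus_commute)
    also have "\<dots> \<le> e^2 * ?q * (?b ^ n * enorm C X)"
      using enorm_kraus_euler_diff[OF assms(1)] enorm_kraus_iter[OF assms]
      by (meson order.trans mult_left_mono zero_le_power2 zero_le_mult_iff)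
    also have "\<dots> \<le> e^2 * ?q * (?b ^ Suc n * enorm C X)"
      using b1 enorm_nonneg by (intro mult_left_mono mult_right_mono) (auto simp: power_increasing)
    finally show ?thesis .
  qed
  have "enorm C (\<lambda>x y. (?A ^^ Suc n) X x y - (?B ^^ Suc n) X x y)
     = enorm C (\<lambda>x y. (?A ?An x y - ?A ?Bn x y) + (?A ?Bn x y - ?B ?Bn x y))"
    by simp
  also have "\<dots> \<le> enorm C (\<lambda>x y. ?A ?An x y - ?A ?Bn x y) + enorm C (\<lambda>x y. ?A ?Bn x y - ?B ?Bn x y)"
    by (rule enorm_add)
  finally show ?case using propagated fresh by (simp add: algebra_simps)
qed

section \<open>Euler iterates converge to the exponential series\<close>

lemma binomial_sum_shift:
  "(\<Sum>j\<le>n. of_nat (n choose j) * (T j::complex)) = T 0 + (\<Sum>j\<le>n. of_nat (n choose Suc j) * T (Suc j))"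
proof (cases n)
  case (Suc n')
  have "(\<Sum>j\<le>n. of_nat (n choose j) * T j) = T 0 + (\<Sum>j\<le>n'. of_nat (n choose Suc j) * T (Suc j))"
    unfolding Suc sum.atMost_Suc_shift by simp
  also have "(\<Sum>j\<le>n'. of_nat (n choose Suc j) * T (Suc j)) = (\<Sum>j\<le>n. of_nat (n choose Suc j) * T (Suc j))"
    unfolding Suc sum.atMost_Suc by (simp del: binomial_Suc_Suc add: binomial_eq_0)
  finally show ?thesis .
qed simp

lemma binomial_sum_Suc:
  "(\<Sum>j\<le>n. of_nat (n choose j) * T j) + (\<Sum>j\<le>n. of_nat (n choose j) * T (Suc j))
   = (\<Sum>j\<le>Suc n. of_nat (Suc n choose j) * (T j::complex))"
proof -
  have "(\<Sum>j\<le>Suc n. of_nat (Suc n choose j) * T j) = T 0 + (\<Sum>j\<le>n. of_nat (Suc n choose Suc j) * T (Suc j))"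
    unfolding sum.atMost_Suc_shift by simp
  also have "\<dots> = T 0 + (\<Sum>j\<le>n. of_nat (n choose Suc j) * T (Suc j)) + (\<Sum>j\<le>n. of_nat (n choose j) * T (Suc j))"
    by (simp add: sum.distrib algebra_simps)
  finally show ?thesis unfolding binomial_sum_shift by simp
qed

lemma euler_iter_expand:
  "(euler_step C m D e ^^ n) X = (\<lambda>x y. \<Sum>j\<le>n. of_nat (n choose j) * (of_real e ^ j * (lind C m D ^^ j) X x y))"
proof (induction n)
  case (Suc n)
  let ?T = "\<lambda>j x y. of_real e ^ j * (lind C m D ^^ j) X x y"
  have "(euler_step C m D e ^^ Suc n) X = euler_step C m D e (\<lambda>x y. \<Sum>j\<le>n. of_nat (n choose j) * ?T j x y)"
    using Suc by simp
  also have "\<dots> = (\<lambda>x y. (\<Sum>j\<le>n. of_nat (n choose j) * ?T j x y) + (\<Sum>j\<le>n. of_nat (n choose j) * ?T (Suc j) x y))"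
  proof (intro ext)
    fix x y
    have "lind C m D (\<lambda>x y. \<Sum>j\<le>n. of_nat (n choose j) * ?T j x y) x y
        = lind C m D (\<lambda>x y. \<Sum>j\<le>n. (of_nat (n choose j) * of_real e ^ j) * (lind C m D ^^ j) X x y) x y"
      by (simp add: mult.assoc)
    also have "\<dots> = (\<Sum>j\<le>n. (of_nat (n choose j) * of_real e ^ j) * (lind C m D ^^ Suc j) X x y)"
      by (simp add: lind_sum_scaled)
    finally have "of_real e * lind C m D (\<lambda>x y. \<Sum>j\<le>n. of_nat (n choose j) * ?T j x y) x y
        = (\<Sum>j\<le>n. of_nat (n choose j) * ?T (Suc j) x y)"
      by (simp add: sum_distrib_left mult_ac)
    thus "euler_step C m D e (\<lambda>x y. \<Sum>j\<le>n. of_nat (n choose j) * ?T j x y) x y =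
      (\<Sum>j\<le>n. of_nat (n choose j) * ?T j x y) + (\<Sum>j\<le>n. of_nat (n choose j) * ?T (Suc j) x y)"
      unfolding euler_step_def by simp
  qed
  also have "\<dots> = (\<lambda>x y. \<Sum>j\<le>Suc n. of_nat (Suc n choose j) * ?T j x y)"
    by (intro ext binomial_sum_Suc)
  finally show ?case .
qed simp

text \<open>The exponential series defining e^{tL} converges entrywise, dominated by exp(|t| M).\<close>
lemma evol_sums:
  assumes f: "finite C" and x: "x \<in> C" and y: "y \<in> C"
  shows "(\<lambda>j. of_real (t^j / fact j) * (lind C m D ^^ j) X x y) sums evol (lind C m D) t X x y"
proof -
  let ?M = "lind_const C m D"
  have s: "summable (\<lambda>j. inverse (fact j) * (\<bar>t\<bar> * ?M)^j * enorm C X)"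
    by (intro summable_mult2 summable_exp)
  have "summable (\<lambda>j. of_real (t^j / fact j) * (lind C m D ^^ j) X x y)"
  proof (rule summable_comparison_test'[OF s])
    fix j
    have "norm (of_real (t^j / fact j) * (lind C m D ^^ j) X x y) = \<bar>t\<bar>^j / fact j * cmod ((lind C m D ^^ j) X x y)"
      by (simp add: norm_mult norm_divide norm_power)
    also have "\<dots> \<le> \<bar>t\<bar>^j / fact j * (?M ^ j * enorm C X)"
      by (intro mult_left_mono order.trans[OF enorm_entry[OF f x y] enorm_lind_power]) auto
    also have "\<dots> = inverse (fact j) * (\<bar>t\<bar> * ?M)^j * enorm C X"
      by (simp add: power_mult_distrib field_simps)
    finally show "norm (of_real (t^j / fact j) * (lind C m D ^^ j) X x y) \<le> inverse (fact j) * (\<bar>t\<bar> * ?M)^j * enorm C X" .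
  qed
  thus ?thesis unfolding evol_def by (rule summable_sums)
qed

lemma sesq_evol_sums:
  assumes f: "finite C"
  shows "(\<lambda>j. of_real (t^j / fact j) * sesq C w ((lind C m D ^^ j) X) w) sums sesq C w (evol (lind C m D) t X) w"
proof -
  have "(\<lambda>j. \<Sum>x\<in>C. \<Sum>y\<in>C. cnj (w x) * (of_real (t^j / fact j) * (lind C m D ^^ j) X x y) * w y)
        sums (\<Sum>x\<in>C. \<Sum>y\<in>C. cnj (w x) * evol (lind C m D) t X x y * w y)"
    by (intro sums_sum sums_mult sums_mult2 evol_sums f)
  moreover have "(\<lambda>j. \<Sum>x\<in>C. \<Sum>y\<in>C. cnj (w x) * (of_real (t^j / fact j) * (lind C m D ^^ j) X x y) * w y)
     = (\<lambda>j. of_real (t^j / fact j) * sesq C w ((lind C m D ^^ j) X) w)"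
    using sesq_scale[of C w _ _ w] unfolding sesq_def by presburger
  ultimately show ?thesis unfolding sesq_def by simp
qed

lemma binom_coeff_le:
  assumes "0 \<le> t" "0 < n"
  shows "real (n choose j) * (t / real n)^j \<le> t^j / fact j"
proof -
  have choose_fact: "real (n choose j) * fact j \<le> real n ^ j"
    using binomial_fact_pow[of n j] by (metis of_nat_fact of_nat_le_iff of_nat_mult of_nat_power)
  have "real (n choose j) * (t / real n)^j = (real (n choose j) * fact j) * t^j / (fact j * real n ^ j)"
    using assms by (simp add: power_divide field_simps)
  also have "\<dots> \<le> real n ^ j * t^j / (fact j * real n ^ j)"
    using assms choose_fact by (intro divide_right_mono mult_right_mono) auto
  also have "\<dots> = t^j / fact j" using assms by simp
  finally show ?thesis .
qed

definition binom_weight :: "nat \<Rightarrow> real \<Rightarrow> nat \<Rightarrow> real" where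
  "binom_weight n e j = (if j \<in> {..n} then real (n choose j) * e^j else 0)"

lemma binom_weight_le: "0 \<le> t \<Longrightarrow> 0 < n \<Longrightarrow> binom_weight n (t / real n) j \<le> t^j / fact j"
  unfolding binom_weight_def using binom_coeff_le by auto

lemma binom_weight_sums: "(\<lambda>j. binom_weight n e j * M^j) sums (1 + e * M)^n"
proof -
  have "(1 + e * M)^n = (\<Sum>j\<in>{..n}. real (n choose j) * e^j * M^j)"
    unfolding add.commute[of 1] binomial_ring by (simp add: power_mult_distrib mult.assoc)
  hence "(\<lambda>j. if j \<in> {..n} then real (n choose j) * e^j * M^j else 0) sums (1 + e * M)^n"
    by (simp only:) (rule sums_If_finite_set, simp)
  moreover have "(\<lambda>j. if j \<in> {..n} then real (n choose j) * e^j * M^j else 0) = (\<lambda>j. binom_weight n e j * M^j)"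
    unfolding binom_weight_def by (auto simp: fun_eq_iff)
  ultimately show ?thesis by simp
qed

lemma sesq_euler_iter_sums:
  "(\<lambda>j. of_real (binom_weight n e j) * sesq C w ((lind C m D ^^ j) X) w)
     sums sesq C w ((euler_step C m D e ^^ n) X) w"
proof -
  have "sesq C w ((euler_step C m D e ^^ n) X) w
      = (\<Sum>j\<in>{..n}. of_nat (n choose j) * (of_real e ^ j * sesq C w ((lind C m D ^^ j) X) w))"
    unfolding euler_iter_expand sesq_sum sesq_scale ..
  hence "(\<lambda>j. if j \<in> {..n} then of_nat (n choose j) * (of_real e ^ j * sesq C w ((lind C m D ^^ j) X) w) else 0)
      sums sesq C w ((euler_step C m D e ^^ n) X) w"
    by (simp only:) (rule sums_If_finite_set, simp)
  moreover have "(\<lambda>j. if j \<in> {..n} then of_nat (n choose j) * (of_real e ^ j * sesq C w ((lind C m D ^^ j) X) w) else 0)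
      = (\<lambda>j. of_real (binom_weight n e j) * sesq C w ((lind C m D ^^ j) X) w)"
    unfolding binom_weight_def by (auto simp: fun_eq_iff)
  ultimately show ?thesis by simp
qed

text \<open>Quantitative convergence of the Euler iterates: comparing the two series term by
  term, the error is dominated by the error of (1 + tM/n)^n against exp(tM).\<close>
lemma euler_approx:
  assumes f: "finite C" and t: "0 \<le> t" and n: "0 < n"
  shows "cmod (sesq C w ((euler_step C m D (t / real n) ^^ n) X) w - sesq C w (evol (lind C m D) t X) w)
     \<le> (\<Sum>x\<in>C. cmod (w x))^2 * enorm C X * (exp (t * lind_const C m D) - (1 + t * lind_const C m D / real n)^n)"
proof -
  let ?e = "t / real n" and ?M = "lind_const C m D" and ?W = "(\<Sum>x\<in>C. cmod (w x))^2 * enorm C X"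
  define a where "a j = sesq C w ((lind C m D ^^ j) X) w" for j
  define b where "b = binom_weight n ?e"
  have a_bound: "cmod (a j) \<le> ?W * ?M^j" for j
  proof -
    have "cmod (a j) \<le> (\<Sum>x\<in>C. cmod (w x))^2 * enorm C ((lind C m D ^^ j) X)"
      unfolding a_def by (rule sesq_bound[OF f])
    also have "\<dots> \<le> (\<Sum>x\<in>C. cmod (w x))^2 * (?M^j * enorm C X)"
      by (intro mult_left_mono enorm_lind_power) auto
    finally show ?thesis by (simp add: mult_ac)
  qed
  have b_le: "b j \<le> t^j / fact j" for j
    unfolding b_def using binom_weight_le[OF t n] .
  have diff_sums: "(\<lambda>j. of_real (t^j / fact j - b j) * a j)
      sums (sesq C w (evol (lind C m D) t X) w - sesq C w ((euler_step C m D ?e ^^ n) X) w)"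
    using sums_diff[OF sesq_evol_sums[OF f] sesq_euler_iter_sums] unfolding a_def b_def
    by (simp add: algebra_simps)
  have exp_sums: "(\<lambda>j. (t * ?M)^j / fact j) sums exp (t * ?M)"
    using exp_converges[of "t * ?M"] by (simp add: divide_inverse mult.commute)
  have majorant: "(\<lambda>j. ?W * ((t * ?M)^j / fact j - b j * ?M^j)) sums (?W * (exp (t * ?M) - (1 + t * ?M / real n)^n))"
    using binom_weight_sums[of n ?e ?M] unfolding b_def by (intro sums_mult sums_diff exp_sums) simp
  have "cmod (sesq C w (evol (lind C m D) t X) w - sesq C w ((euler_step C m D ?e ^^ n) X) w)
     \<le> (\<Sum>j. ?W * ((t * ?M)^j / fact j - b j * ?M^j))"
    unfolding sums_unique[OF diff_sums]
  proof (rule norm_suminf_le)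
    fix j
    have nn: "0 \<le> t^j / fact j - b j" using b_le[of j] by simp
    have "cmod (of_real (t^j / fact j - b j) * a j) = (t^j / fact j - b j) * cmod (a j)"
      by (simp only: norm_mult norm_of_real abs_of_nonneg[OF nn])
    also have "\<dots> \<le> (t^j / fact j - b j) * (?W * ?M^j)"
      using nn a_bound[of j] by (intro mult_left_mono) auto
    also have "\<dots> = ?W * ((t * ?M)^j / fact j - b j * ?M^j)"
      by (simp add: power_mult_distrib algebra_simps)
    finally show "cmod (of_real (t^j / fact j - b j) * a j) \<le> ?W * ((t * ?M)^j / fact j - b j * ?M^j)" .
  qed (rule sums_summable[OF majorant])
  also have "\<dots> = ?W * (exp (t * ?M) - (1 + t * ?M / real n)^n)" by (rule sums_unique[OF majorant, symmetric])
  finally show ?thesis by (simp add: norm_minus_commute)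
qed

section \<open>Populations of dark vectors never decrease\<close>

lemma step_power_le_exp:
  fixes t M q :: real
  assumes "0 \<le> t" "0 \<le> M" "0 \<le> q" "0 < n"
  shows "(1 + (t / real n) * M + (t / real n)^2 * q) ^ n \<le> exp (t * M + t^2 * q)"
proof -
  have "(t / real n)^2 * q = t^2 * q / (real n * real n)" by (simp add: power_divide power2_eq_square)
  also have "\<dots> \<le> t^2 * q / real n"
    using assms by (intro divide_left_mono) (auto simp: mult_le_cancel_left1)
  finally have "1 + (t / real n) * M + (t / real n)^2 * q \<le> 1 + (t * M + t^2 * q) / real n"
    by (simp add: add_divide_distrib)
  hence "(1 + (t / real n) * M + (t / real n)^2 * q) ^ n \<le> (1 + (t * M + t^2 * q) / real n) ^ n"
    using assms by (intro power_mono) auto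
  also have "\<dots> \<le> exp (t * M + t^2 * q)"
    using assms by (intro exp_ge_one_plus_x_over_n_power_n) (auto intro: order.trans[of _ 0])
  finally show ?thesis .
qed

lemma euler_kraus_gap:
  assumes f: "finite C" and t: "0 \<le> t" and n: "0 < n"
  shows "cmod (sesq C w ((euler_step C m D (t / real n) ^^ n) X) w - sesq C w ((kraus_step C m D (t / real n) ^^ n) X) w)
     \<le> (\<Sum>x\<in>C. cmod (w x))^2 * t^2 * enorm C (damp_op C m D) ^ 2
         * exp (t * lind_const C m D + t^2 * enorm C (damp_op C m D) ^ 2) * enorm C X / real n"
proof -
  let ?q = "enorm C (damp_op C m D) ^ 2"
  let ?e = "t / real n" and ?M = "lind_const C m D" and ?W = "(\<Sum>x\<in>C. cmod (w x))^2"
  let ?An = "(euler_step C m D ?e ^^ n) X" and ?Bn = "(kraus_step C m D ?e ^^ n) X"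
  let ?b = "1 + ?e * ?M + ?e^2 * ?q"
  have "cmod (sesq C w ?An w - sesq C w ?Bn w) = cmod (sesq C w (\<lambda>x y. ?An x y - ?Bn x y) w)"
    by (simp add: sesq_diff)
  also have "\<dots> \<le> ?W * enorm C (\<lambda>x y. ?An x y - ?Bn x y)" by (rule sesq_bound[OF f])
  also have "\<dots> \<le> ?W * (real n * ?e^2 * ?q * ?b ^ n * enorm C X)"
    using t by (intro mult_left_mono enorm_euler_kraus_iter_diff[OF f]) simp_all
  also have "\<dots> = ?W * t^2 * ?q * ?b ^ n * enorm C X / real n"
    using n by (simp add: power2_eq_square)
  also have "\<dots> \<le> ?W * t^2 * ?q * exp (t * ?M + t^2 * ?q) * enorm C X / real n"
    using t n lind_const_nonneg
    by (intro divide_right_mono mult_right_mono mult_left_mono step_power_le_exp enorm_nonneg) auto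
  finally show ?thesis .
qed

text \<open>For each n, n Kraus steps raise the population,
  and they are close to n Euler steps, which converge to e^{tL}(X) as n \<rightarrow> \<infinity>.\<close>
lemma dark_population_mono:
  assumes f: "finite C" and w: "dark C m D w" and X: "psd C X" and t: "0 \<le> t"
  shows "Re (sesq C w X w) \<le> Re (sesq C w (evol (lind C m D) t X) w)"
proof -
  let ?M = "lind_const C m D" and ?q = "enorm C (damp_op C m D) ^ 2" and ?W = "(\<Sum>x\<in>C. cmod (w x))^2"
  let ?g = "sesq C w (evol (lind C m D) t X) w"
  define c1 where "c1 = ?W * enorm C X"
  define c2 where "c2 = ?W * t^2 * ?q * exp (t * ?M + t^2 * ?q) * enorm C X"
  define bound where "bound n = Re ?g + c1 * (exp (t * ?M) - (1 + t * ?M / real n)^n) + c2 / real n" for n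
  have estimate: "Re (sesq C w X w) \<le> bound n" if n: "0 < n" for n
  proof -
    let ?e = "t / real n"
    let ?An = "(euler_step C m D ?e ^^ n) X" and ?Bn = "(kraus_step C m D ?e ^^ n) X"
    have "Re (sesq C w X w) \<le> Re (sesq C w ?Bn w)"
      using kraus_iter_mono[OF f w _ X] t by simp
    also have "\<dots> \<le> Re ?g + cmod (sesq C w ?An w - ?g) + cmod (sesq C w ?An w - sesq C w ?Bn w)"
      using abs_Re_le_cmod[of "sesq C w ?An w - ?g"] abs_Re_le_cmod[of "sesq C w ?An w - sesq C w ?Bn w"]
      unfolding minus_complex.sel by linarith
    also have "\<dots> \<le> bound n"
      using euler_approx[OF f t n, where w=w and m=m and D=D and X=X]
        euler_kraus_gap[OF f t n, where w=w and m=m and D=D and X=X]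
      unfolding bound_def c1_def c2_def by linarith
    finally show ?thesis .
  qed
  have "bound \<longlonglongrightarrow> Re ?g + c1 * (exp (t * ?M) - exp (t * ?M)) + 0"
    unfolding bound_def by (intro tendsto_intros tendsto_exp_limit_sequentially lim_const_over_n)
  hence "Re (sesq C w X w) \<le> Re ?g + c1 * (exp (t * ?M) - exp (t * ?M)) + 0"
    by (rule LIMSEQ_le_const) (use estimate in \<open>intro exI[of _ 1] allI impI, simp\<close>)
  thus ?thesis by simp
qed

section \<open>Quasi-local operators killing the target kill all of H_0\<close>

lemma merge_cfgs: "u \<in> cfgs n d \<Longrightarrow> z \<in> cfgs n d \<Longrightarrow> merge N u z \<in> cfgs n d"
  unfolding cfgs_def merge_def by auto

lemma merge_restr: "merge N (restr N y) z = merge N y z"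
  unfolding merge_def restr_def by (auto simp: fun_eq_iff)

lemma restr_merge: "restr N (merge N y z) = restr N y"
  unfolding merge_def restr_def by (auto simp: fun_eq_iff)

text \<open>If D = D_M \<otimes> I kills \<Psi>, then D_M \<otimes> I also kills every "slice" of \<Psi> whose
  configuration outside M is replaced by that of a fixed \<zeta>: shifting the outer
  configuration of the row index x to that of \<zeta> is a bijection of the summation range.\<close>
lemma ql_kills_slice:
  assumes x: "x \<in> cfgs n d" and \<zeta>: "\<zeta> \<in> cfgs n d"
    and DN: "\<forall>x\<in>cfgs n d. \<forall>y\<in>cfgs n d. Dk x y = tensor_id M DN x y"
    and kill: "mvec (cfgs n d) Dk \<Psi> = (\<lambda>_. 0)"
  shows "(\<Sum>y\<in>cfgs n d. if (\<forall>a. a \<notin> M \<longrightarrow> x a = y a)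
            then DN (restr M x) (restr M y) * \<Psi> (merge M y \<zeta>) else 0) = 0"
proof -
  let ?C = "cfgs n d"
  let ?x' = "merge M x \<zeta>"
  have x': "?x' \<in> ?C" using merge_cfgs[OF x \<zeta>] .
  let ?Y = "{y\<in>?C. \<forall>a. a \<notin> M \<longrightarrow> x a = y a}"
  let ?Y' = "{y\<in>?C. \<forall>a. a \<notin> M \<longrightarrow> ?x' a = y a}"
  have "0 = mvec ?C Dk \<Psi> ?x'" using kill by simp
  also have "\<dots> = (\<Sum>y\<in>?C. Dk ?x' y * \<Psi> y)" using x' unfolding mvec_def by simp
  also have "\<dots> = (\<Sum>y\<in>?C. if (\<forall>a. a \<notin> M \<longrightarrow> ?x' a = y a) then DN (restr M x) (restr M y) * \<Psi> y else 0)"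
    using DN x' unfolding tensor_id_def by (intro sum.cong refl) (auto simp: restr_merge)
  also have "\<dots> = (\<Sum>y\<in>?Y'. DN (restr M x) (restr M y) * \<Psi> y)"
    by (simp add: sum.inter_filter[symmetric] finite_cfgs)
  finally have shifted: "(\<Sum>y\<in>?Y'. DN (restr M x) (restr M y) * \<Psi> y) = 0" by simp
  have "(\<Sum>y\<in>?C. if (\<forall>a. a \<notin> M \<longrightarrow> x a = y a) then DN (restr M x) (restr M y) * \<Psi> (merge M y \<zeta>) else 0)
     = (\<Sum>y\<in>?Y. DN (restr M x) (restr M y) * \<Psi> (merge M y \<zeta>))"
    by (simp add: sum.inter_filter[symmetric] finite_cfgs)
  also have "\<dots> = (\<Sum>y\<in>?Y'. DN (restr M x) (restr M y) * \<Psi> y)"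
  proof (rule sum.reindex_bij_witness[where j = "\<lambda>y. merge M y \<zeta>" and i = "\<lambda>y. merge M y x"])
    fix y assume y: "y \<in> ?Y"
    show "merge M (merge M y \<zeta>) x = y" using y unfolding merge_def by (auto simp: fun_eq_iff)
    show "merge M y \<zeta> \<in> ?Y'" using y merge_cfgs[OF _ \<zeta>] unfolding merge_def by auto
    show "DN (restr M x) (restr M (merge M y \<zeta>)) * \<Psi> (merge M y \<zeta>) = DN (restr M x) (restr M y) * \<Psi> (merge M y \<zeta>)"
      by (simp add: restr_merge)
  next
    fix y assume y: "y \<in> ?Y'"
    show "merge M (merge M y x) \<zeta> = y" using y unfolding merge_def by (auto simp: fun_eq_iff)
    show "merge M y x \<in> ?Y" using y merge_cfgs[OF _ x] unfolding merge_def by auto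
  qed
  finally show ?thesis using shifted by simp
qed

lemma ql_reduced_entry:
  assumes x: "x \<in> cfgs n d" and y: "y \<in> cfgs n d"
    and DN: "\<forall>x\<in>cfgs n d. \<forall>y\<in>cfgs n d. Dk x y = tensor_id M DN x y"
  defines "ag \<equiv> \<lambda>x y. \<forall>a. a \<notin> M \<longrightarrow> x a = y a"
  shows "Dk x y * tensor_id M (ptrace (cfgs n d) M (proj \<Psi>)) y z
    = (\<Sum>\<zeta>\<in>{z \<in> cfgs n d. \<forall>a\<in>M. z a = 0}. (if ag x z then cnj (\<Psi> (merge M z \<zeta>)) else 0)
        * (if ag x y then DN (restr M x) (restr M y) * \<Psi> (merge M y \<zeta>) else 0))"
proof (cases "ag x y")
  case xy: True
  hence same: "ag y z = ag x z" unfolding ag_def by auto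
  show ?thesis
  proof (cases "ag x z")
    case True
    hence "ag y z" using same by simp
    thus ?thesis using DN x y xy True unfolding ag_def tensor_id_def ptrace_def proj_def merge_restr
      by (simp add: sum_distrib_left mult_ac)
  next
    case False
    hence "\<not> ag y z" using same by simp
    hence "tensor_id M (ptrace (cfgs n d) M (proj \<Psi>)) y z = 0"
      unfolding ag_def tensor_id_def by (simp only: if_False mult_zero_right)
    thus ?thesis using False by simp
  qed
next
  case False
  hence "Dk x y = 0" using DN x y unfolding ag_def tensor_id_def by (simp only: if_False mult_zero_right)
  thus ?thesis using False by simp
qed

lemma ql_annihilates_reduced_state:
  assumes DN: "\<forall>x\<in>cfgs n d. \<forall>y\<in>cfgs n d. Dk x y = tensor_id M DN x y"
    and kill: "mvec (cfgs n d) Dk \<Psi> = (\<lambda>_. 0)"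
    and x: "x \<in> cfgs n d"
  shows "mmul (cfgs n d) Dk (tensor_id M (ptrace (cfgs n d) M (proj \<Psi>))) x z = 0"
proof -
  let ?C = "cfgs n d" and ?Z = "{z \<in> cfgs n d. \<forall>a\<in>M. z a = 0}"
  let ?ag = "\<lambda>x y. \<forall>a. a \<notin> M \<longrightarrow> x a = y a"
  let ?S = "\<lambda>\<zeta> y. if ?ag x y then DN (restr M x) (restr M y) * \<Psi> (merge M y \<zeta>) else 0"
  have "mmul ?C Dk (tensor_id M (ptrace ?C M (proj \<Psi>))) x z
      = (\<Sum>y\<in>?C. \<Sum>\<zeta>\<in>?Z. (if ?ag x z then cnj (\<Psi> (merge M z \<zeta>)) else 0) * ?S \<zeta> y)"
    unfolding mmul_def using ql_reduced_entry[OF x _ DN] by (intro sum.cong) auto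
  also have "\<dots> = (\<Sum>\<zeta>\<in>?Z. (if ?ag x z then cnj (\<Psi> (merge M z \<zeta>)) else 0) * (\<Sum>y\<in>?C. ?S \<zeta> y))"
    by (subst sum.swap) (simp only: sum_distrib_left)
  also have "\<dots> = 0"
    using ql_kills_slice[OF x _ DN kill] by (intro sum.neutral) auto
  finally show ?thesis .
qed

lemma H0_dark:
  assumes w: "w \<in> H0 (cfgs n d) m N (proj \<Psi>)"
    and ql: "\<forall>k<m. ql_op (cfgs n d) (N k) (D k)"
    and kill: "\<forall>k<m. mvec (cfgs n d) (D k) \<Psi> = (\<lambda>_. 0)"
  shows "dark (cfgs n d) m D w"
  unfolding dark_def
proof (intro conjI allI impI)
  show "w \<in> vecs (cfgs n d)" using w unfolding H0_def by blast
next
  fix k assume k: "k < m"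
  let ?C = "cfgs n d" and ?T = "tensor_id (N k) (ptrace (cfgs n d) (N k) (proj \<Psi>))"
  obtain DN where DN: "\<forall>x\<in>?C. \<forall>y\<in>?C. D k x y = tensor_id (N k) DN x y"
    using ql k unfolding ql_op_def by blast
  obtain u where u: "w = mvec ?C ?T u" using w k unfolding H0_def supp_op_def by blast
  have "mmul ?C (D k) ?T x z = 0" if "x \<in> ?C" for x z
    using ql_annihilates_reduced_state[OF DN _ that] kill k by blast
  hence "mvec ?C (mmul ?C (D k) ?T) u = (\<lambda>_. 0)" unfolding mvec_def by (simp add: fun_eq_iff)
  thus "mvec ?C (D k) w = (\<lambda>_. 0)" unfolding u mvec_mmul .
qed

definition sqnorm :: "cfg set \<Rightarrow> vec \<Rightarrow> real" where
  "sqnorm C v = (\<Sum>x\<in>C. (cmod (v x))^2)"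

definition rank_one_state :: "cfg set \<Rightarrow> vec \<Rightarrow> op" where
  "rank_one_state C v = (\<lambda>x y. v x * cnj (v y) * of_real (1 / sqnorm C v))"

lemma inner_self_sqnorm: "inner_c C v v = of_real (sqnorm C v)"
  unfolding inner_c_def sqnorm_def by (simp only: of_real_sum complex_norm_square) (simp add: mult.commute)

lemma sqnorm_pos:
  assumes f: "finite C" and ne: "inner_c C w v \<noteq> 0"
  shows "0 < sqnorm C v"
proof (rule ccontr)
  assume "\<not> 0 < sqnorm C v"
  hence "sqnorm C v = 0" unfolding sqnorm_def using sum_nonneg[of C "\<lambda>x. (cmod (v x))^2"] by simp
  hence "\<forall>x\<in>C. v x = 0" unfolding sqnorm_def using f by (subst (asm) sum_nonneg_eq_0_iff) auto
  thus False using ne unfolding inner_c_def by simp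
qed

lemma sesq_rank_one_state: "sesq C u (rank_one_state C v) u = of_real ((cmod (inner_c C u v))^2 / sqnorm C v)"
  unfolding rank_one_state_def sesq_rank1 complex_norm_square[symmetric] by simp

lemma rank_one_state_psd: "psd C (rank_one_state C v)"
  unfolding psd_def sesq_rank_one_state sqnorm_def by (simp add: sum_nonneg)

lemma rank_one_state_density:
  assumes "0 < sqnorm C v"
  shows "density C (rank_one_state C v)"
  unfolding density_def inner_mvec_sesq sesq_rank_one_state
proof (intro conjI ballI)
  show "trace_c C (rank_one_state C v) = 1"
    using inner_self_sqnorm[of C v] assms unfolding trace_c_def rank_one_state_def inner_c_def
    by (simp add: sum_divide_distrib[symmetric] mult.commute)
qed (use assms in auto)

text \<open>The range of |v><v| is spanned by v, hence lies in any subspace containing v.\<close>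
lemma rank_one_state_supp:
  assumes sub: "is_subspace C H" and v: "v \<in> H"
  shows "supp_op C (rank_one_state C v) \<subseteq> H"
proof
  fix z assume "z \<in> supp_op C (rank_one_state C v)"
  then obtain u where z: "z = mvec C (rank_one_state C v) u" unfolding supp_op_def by blast
  have "v \<in> vecs C" using sub v unfolding is_subspace_def by blast
  hence "z = (\<lambda>x. (of_real (1 / sqnorm C v) * (\<Sum>y\<in>C. cnj (v y) * u y)) * v x)"
    unfolding z mvec_def rank_one_state_def vecs_def by (auto simp: fun_eq_iff sum_distrib_left mult_ac)
  thus "z \<in> H" using sub v unfolding is_subspace_def by blast
qed

lemma stable_population_limit:
  assumes "cond_asym_stable C L \<rho>d H" "density C \<rho>0" "supp_op C \<rho>0 \<subseteq> H"
  shows "((\<lambda>t. sesq C w (evol L t \<rho>0) w) \<longlongrightarrow> sesq C w \<rho>d w) at_top"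
proof -
  have "\<forall>x\<in>C. \<forall>y\<in>C. ((\<lambda>t. evol L t \<rho>0 x y) \<longlongrightarrow> \<rho>d x y) at_top"
    using assms unfolding cond_asym_stable_def by blast
  thus ?thesis unfolding sesq_def by (intro tendsto_sum tendsto_mult tendsto_const) auto
qed

lemma sesq_proj_orth:
  assumes "inner_c C \<Psi> w = 0"
  shows "sesq C w (proj \<Psi>) w = 0"
proof -
  have "sesq C w (proj \<Psi>) w = inner_c C w \<Psi> * cnj (inner_c C w \<Psi>)"
    using sesq_rank1[of C w \<Psi> 1] unfolding proj_def by simp
  also have "cnj (inner_c C w \<Psi>) = inner_c C \<Psi> w"
    unfolding inner_c_def by (simp add: mult.commute)
  finally show ?thesis using assms by simp
qed

theorem lemma2:
  fixes n :: nat and d :: "nat \<Rightarrow> nat" and m :: nat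
    and N :: "nat \<Rightarrow> nat set" and D :: "nat \<Rightarrow> op"
    and \<Psi> :: vec and H' :: "vec set"
  assumes dims: "\<forall>a<n. 0 < d a"
    and nbhd: "\<forall>k<m. N k \<subset> {..<n}"
    and psi: "\<Psi> \<in> vecs (cfgs n d)" "inner_c (cfgs n d) \<Psi> \<Psi> = 1"
    and sub: "is_subspace (cfgs n d) H'"
    and ql: "\<forall>k<m. ql_op (cfgs n d) (N k) (D k)"
    and kill: "\<forall>k<m. mvec (cfgs n d) (D k) \<Psi> = (\<lambda>_. 0)"
    and stable: "cond_asym_stable (cfgs n d) (lind (cfgs n d) m D) (proj \<Psi>) H'"
  shows "H' \<subseteq> orth_compl (cfgs n d) (Hw (cfgs n d) m N \<Psi>)"
proof
  let ?C = "cfgs n d"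
  fix v assume v: "v \<in> H'"
  have "v \<in> vecs ?C" using sub v unfolding is_subspace_def by blast
  moreover have "inner_c ?C w v = 0" if w: "w \<in> Hw ?C m N \<Psi>" for w
  proof (rule ccontr)
    assume ne: "inner_c ?C w v \<noteq> 0"
    let ?state = "rank_one_state ?C v"
    let ?pop = "\<lambda>t. Re (sesq ?C w (evol (lind ?C m D) t ?state) w)"
    have s: "0 < sqnorm ?C v" using sqnorm_pos[OF finite_cfgs ne] .
    have dark: "dark ?C m D w" using H0_dark[OF _ ql kill] w unfolding Hw_def by blast
    have orth: "inner_c ?C \<Psi> w = 0" using w unfolding Hw_def by blast
    have "(?pop \<longlongrightarrow> 0) at_top"
      using tendsto_Re[OF stable_population_limit[OF stable rank_one_state_density[OF s]
          rank_one_state_supp[OF sub v], where w=w]] sesq_proj_orth[OF orth] by simp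
    moreover have "\<forall>\<^sub>F t in at_top. Re (sesq ?C w ?state w) \<le> ?pop t"
      using eventually_ge_at_top[of "0::real"]
      by (rule eventually_mono) (intro dark_population_mono finite_cfgs dark rank_one_state_psd)
    ultimately have "Re (sesq ?C w ?state w) \<le> 0" by (rule tendsto_lowerbound) simp
    moreover have "0 < (cmod (inner_c ?C w v))^2 / sqnorm ?C v" using s ne by simp
    ultimately show False by (simp add: sesq_rank_one_state)
  qed
  ultimately show "v \<in> orth_compl ?C (Hw ?C m N \<Psi>)" unfolding orth_compl_def by blast
qed

end
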